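(* Let $H$ be a compact subgroup of a locally compact group $G$, and let $l$ be a length function on $G$ which is bounded on $H$. Then there exists a length function $l'$ on $G$ such that: (i) $l$ and $l'$ are equivalent; (ii) the kernel $\{g\in G: l'(g)=0\}$ of $l'$ contains $H$, i.e. $l'$ is a length function on the pair $(G,H)$; (iii) if $l$ is locally bounded (resp. proper), then $l'$ is locally bounded (resp. proper), both as a length function on $G$ and as a length function on the pair $(G,H)$.
   Context: A length function on a locally compact group $G$ is a Borel function $l:G\to[0,\infty)$ with $l(e)=0$, $l(g)=l(g^{-1})$ and $l(gh)\le l(g)+l(h)$ for all $g,h$. A length function on the pair $(G,H)$ is a length function on $G$ vanishing on $H$ (it is then bi-$H$-invariant and induces a function on $H\backslash G$). A length function is locally bounded if it is bounded on every compact subset of $G$ (resp. the induced function on $H\backslash G$ is bounded on every compact subset of $H\backslash G$), and proper if $l^{-1}([0,n])$ is relatively compact in $G$ (resp. its image is relatively compact in $H\backslash G$) for every $n$. Two length functions $l_1,l_2$ are equivalent if there are constants $c_0,c_1\ge0$ with $l_2\le c_1l_1+c_0$ and $l_1\le c_1l_2+c_0$ on $G$. *)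

theory Defs
  imports "HOL-Analysis.Analysis"
begin

text \<open>A (not necessarily abelian) topological group is modelled by a type of class
  topological_group_add (group written additively: + is the product, 0 the identity,
  uminus the inverse).  Local compactness and Hausdorffness are separate assumptions.\<close>

definition length_function :: "('a::{topological_space,group_add} \<Rightarrow> real) \<Rightarrow> bool" where
  "length_function l \<longleftrightarrow>
     l \<in> borel_measurable borel \<and> (\<forall>g. 0 \<le> l g) \<and> l 0 = 0 \<and>
     (\<forall>g. l g = l (- g)) \<and> (\<forall>g h. l (g + h) \<le> l g + l h)"

definition is_subgroup :: "'a::group_add set \<Rightarrow> bool" where
  "is_subgroup H \<longleftrightarrow> 0 \<in> H \<and> (\<forall>x\<in>H. \<forall>y\<in>H. x + y \<in> H) \<and> (\<forall>x\<in>H. - x \<in> H)"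

definition pair_length_function :: "'a set \<Rightarrow> ('a::{topological_space,group_add} \<Rightarrow> real) \<Rightarrow> bool" where
  "pair_length_function H l \<longleftrightarrow> length_function l \<and> (\<forall>h\<in>H. l h = 0)"

definition lf_equivalent :: "('a \<Rightarrow> real) \<Rightarrow> ('a \<Rightarrow> real) \<Rightarrow> bool" where
  "lf_equivalent l1 l2 \<longleftrightarrow> (\<exists>c0 c1. 0 \<le> c0 \<and> 0 \<le> c1 \<and>
      (\<forall>g. l2 g \<le> c1 * l1 g + c0 \<and> l1 g \<le> c1 * l2 g + c0))"

definition locally_bounded_lf :: "('a::topological_space \<Rightarrow> real) \<Rightarrow> bool" where
  "locally_bounded_lf l \<longleftrightarrow> (\<forall>K. compact K \<longrightarrow> (\<exists>B. \<forall>g\<in>K. l g \<le> B))"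

definition proper_lf :: "('a::topological_space \<Rightarrow> real) \<Rightarrow> bool" where
  "proper_lf l \<longleftrightarrow> (\<forall>n::real. compact (closure (l -` {..n})))"

definition rcoset :: "'a::group_add set \<Rightarrow> 'a \<Rightarrow> 'a set" where
  "rcoset H g = {h + g | h. h \<in> H}"

definition coset_space :: "'a::group_add set \<Rightarrow> 'a set set" where
  "coset_space H = range (rcoset H)"

definition coset_topology :: "'a::{topological_space,group_add} set \<Rightarrow> 'a set topology" where
  "coset_topology H = topology (\<lambda>U. U \<subseteq> coset_space H \<and> open (\<Union>U))"

definition locally_bounded_pair :: "'a set \<Rightarrow> ('a::{topological_space,group_add} \<Rightarrow> real) \<Rightarrow> bool" where
  "locally_bounded_pair H l \<longleftrightarrow>
     (\<forall>C. compactin (coset_topology H) C \<longrightarrow> (\<exists>B. \<forall>c\<in>C. \<forall>g\<in>c. l g \<le> B))"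

definition proper_pair :: "'a set \<Rightarrow> ('a::{topological_space,group_add} \<Rightarrow> real) \<Rightarrow> bool" where
  "proper_pair H l \<longleftrightarrow>
     (\<forall>n::real. compactin (coset_topology H)
        ((coset_topology H) closure_of (rcoset H ` (l -` {..n}))))"

end

theory Submission
  imports Defs
begin

text \<open>Let \<open>C\<close> bound \<open>l\<close> on \<open>H\<close> and let \<open>A\<^sub>n\<close> be the set of \<open>g\<close> with
  \<open>l(h\<^sub>1 g h\<^sub>2) \<le> n\<close> for all \<open>h\<^sub>1, h\<^sub>2 \<in> H\<close>. These sets are symmetric, bi-\<open>H\<close>-invariant,
  satisfy \<open>A\<^sub>m A\<^sub>n \<subseteq> A\<^sub>m\<^sub>+\<^sub>n\<close> and contain \<open>{l \<le> n - 2C}\<close>, and all of this survives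
  taking closures. Hence the least \<open>n\<close> with \<open>g \<in> closure A\<^sub>n\<close>, redefined to be \<open>0\<close> on
  \<open>H\<close>, is a length function on \<open>(G, H)\<close>; its sublevel sets are closed, so it is Borel, and it
  is at most \<open>l + 2C + 1\<close>. The reverse bound needs \<open>l\<close> to be bounded near the identity:
  by Baire's theorem some sublevel set of \<open>l\<close> is non-meager, and being Borel it has the
  Baire property, so by Pettis' theorem its difference set is a neighbourhood of the identity.
  Local boundedness and properness pass to the quotient \<open>H\<setminus>G\<close> because compact subsets of
  \<open>H\<setminus>G\<close> lift to compact subsets of \<open>G\<close>, and images of compact sets are closed in
  \<open>H\<setminus>G\<close> when \<open>H\<close> is compact.\<close>

lemma translation_eq_vimage: "(+) a ` S = (+) (- a) -` (S :: 'a::group_add set)"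
  by (force simp: image_iff add.assoc[symmetric])

lemma open_translation: "open S \<Longrightarrow> open ((+) (a :: 'a::topological_group_add) ` S)"
  unfolding translation_eq_vimage
  by (intro open_vimage continuous_on_add continuous_on_const continuous_on_id)

lemma closed_translation: "closed S \<Longrightarrow> closed ((+) (a :: 'a::topological_group_add) ` S)"
  unfolding translation_eq_vimage
  by (intro closed_vimage continuous_on_add continuous_on_const continuous_on_id)

lemma continuous_image_closure_subset:
  assumes "continuous_on UNIV f" "f ` S \<subseteq> T"
  shows "f ` closure S \<subseteq> closure T"
  using assms closure_subset[of T]
  by (intro image_closure_subset continuous_on_subset[OF assms(1)]) auto

section \<open>Meager sets and the Baire property\<close>

definition nowhere_dense :: "'a::topological_space set \<Rightarrow> bool" where
  "nowhere_dense F \<longleftrightarrow> closed F \<and> interior F = {}"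

definition meager :: "'a::topological_space set \<Rightarrow> bool" where
  "meager M \<longleftrightarrow> (\<exists>\<F>. countable \<F> \<and> (\<forall>F\<in>\<F>. nowhere_dense F) \<and> M \<subseteq> \<Union>\<F>)"

definition baire_property :: "'a::topological_space set \<Rightarrow> bool" where
  "baire_property A \<longleftrightarrow> (\<exists>U. open U \<and> meager (A - U) \<and> meager (U - A))"

lemma meager_subset: "meager M \<Longrightarrow> N \<subseteq> M \<Longrightarrow> meager N"
  unfolding meager_def by (meson subset_trans)

lemma meager_empty: "meager {}"
  unfolding meager_def by (intro exI[of _ "{}"]) simp

lemma nowhere_dense_imp_meager: "nowhere_dense F \<Longrightarrow> meager F"
  unfolding meager_def by (intro exI[of _ "{F}"]) simp

lemma meager_countable_Union:
  assumes "countable \<M>" "\<And>M. M \<in> \<M> \<Longrightarrow> meager M"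
  shows "meager (\<Union>\<M>)"
proof -
  have "\<forall>M\<in>\<M>. \<exists>\<G>. countable \<G> \<and> (\<forall>F\<in>\<G>. nowhere_dense F) \<and> M \<subseteq> \<Union>\<G>"
    using assms(2) unfolding meager_def by blast
  then obtain \<F> where \<F>: "\<forall>M\<in>\<M>.
      countable (\<F> M) \<and> (\<forall>F\<in>\<F> M. nowhere_dense F) \<and> M \<subseteq> \<Union>(\<F> M)"
    by (rule bchoice[THEN exE])
  show ?thesis
    unfolding meager_def
  proof (intro exI conjI)
    show "countable (\<Union>(\<F> ` \<M>))"
      using \<F> assms(1) by (intro countable_UN) auto
    show "\<forall>F\<in>\<Union>(\<F> ` \<M>). nowhere_dense F"
      using \<F> by blast
    show "\<Union>\<M> \<subseteq> \<Union>(\<Union>(\<F> ` \<M>))"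
    proof
      fix x
      assume "x \<in> \<Union>\<M>"
      then obtain M where "M \<in> \<M>" "x \<in> M"
        by blast
      then obtain F where "F \<in> \<F> M" "x \<in> F"
        using \<F> by blast
      with \<open>M \<in> \<M>\<close> show "x \<in> \<Union>(\<Union>(\<F> ` \<M>))"
        by blast
    qed
  qed
qed

lemma meager_Un:
  assumes "meager A" "meager B"
  shows "meager (A \<union> B)"
proof -
  have "meager (\<Union>{A, B})"
    using assms by (intro meager_countable_Union) auto
  then show ?thesis
    by simp
qed

lemma interior_translation_subset:
  "interior ((+) a ` F) \<subseteq> (+) a ` interior (F :: 'a::topological_group_add set)"
proof
  fix x
  assume "x \<in> interior ((+) a ` F)"
  then obtain T where T: "open T" "x \<in> T" "T \<subseteq> (+) a ` F"
    by (meson interiorE)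
  then have "(+) (- a) ` T \<subseteq> F"
    by auto
  then have "- a + x \<in> interior F"
    using open_translation[OF T(1)] T(2) interior_maximal by blast
  then show "x \<in> (+) a ` interior F"
    by (metis add_minus_cancel image_eqI)
qed

lemma nowhere_dense_translation:
  "nowhere_dense F \<Longrightarrow> nowhere_dense ((+) (a :: 'a::topological_group_add) ` F)"
  unfolding nowhere_dense_def using closed_translation interior_translation_subset by blast

lemma meager_translation:
  assumes "meager M"
  shows "meager ((+) (a :: 'a::topological_group_add) ` M)"
proof -
  obtain \<F> where "countable \<F>" "\<forall>F\<in>\<F>. nowhere_dense F" "M \<subseteq> \<Union>\<F>"
    using assms unfolding meager_def by blast
  then show ?thesis
    unfolding meager_def
  proof (intro exI[of _ "(`) ((+) a) ` \<F>"] conjI)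
    show "(+) a ` M \<subseteq> \<Union>((`) ((+) a) ` \<F>)"
      using \<open>M \<subseteq> \<Union>\<F>\<close> by blast
  qed (use nowhere_dense_translation in auto)
qed

lemma baire_property_open: "open U \<Longrightarrow> baire_property U"
  unfolding baire_property_def using meager_empty by auto

lemma baire_property_Compl:
  assumes "baire_property A"
  shows "baire_property (- A)"
proof -
  obtain U where U: "open U" "meager (A - U)" "meager (U - A)"
    using assms unfolding baire_property_def by blast
  have "nowhere_dense (closure U - U)"
    unfolding nowhere_dense_def
    using U(1) open_Int_closure_eq_empty[OF open_interior, of "closure U - U" U]
      interior_subset[of "closure U - U"]
    by (auto simp: Diff_eq closed_Int open_closed)
  then have "meager ((U - A) \<union> (closure U - U))"
    by (intro meager_Un U(3) nowhere_dense_imp_meager)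
  then have "meager (- A - - closure U)"
    by (rule meager_subset) auto
  moreover have "meager (- closure U - - A)"
    by (rule meager_subset[OF U(2)]) (use closure_subset[of U] in auto)
  ultimately show ?thesis
    unfolding baire_property_def by (intro exI[of _ "- closure U"]) auto
qed

lemma baire_property_countable_Union:
  assumes "\<And>i::nat. baire_property (A i)"
  shows "baire_property (\<Union>i. A i)"
proof -
  have "\<forall>i. \<exists>U. open U \<and> meager (A i - U) \<and> meager (U - A i)"
    using assms unfolding baire_property_def by blast
  then obtain U where U: "\<And>i. open (U i) \<and> meager (A i - U i) \<and> meager (U i - A i)"
    by (metis choice)
  have "meager (\<Union>i. A i - U i)" "meager (\<Union>i. U i - A i)"
    using U by (auto intro: meager_countable_Union)
  moreover have "(\<Union>i. A i) - (\<Union>i. U i) \<subseteq> (\<Union>i. A i - U i)"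
    and "(\<Union>i. U i) - (\<Union>i. A i) \<subseteq> (\<Union>i. U i - A i)"
    by blast+
  ultimately have "meager ((\<Union>i. A i) - (\<Union>i. U i))" "meager ((\<Union>i. U i) - (\<Union>i. A i))"
    by (auto intro: meager_subset)
  then show ?thesis
    unfolding baire_property_def using U by blast
qed

lemma borel_imp_baire_property: "A \<in> sets borel \<Longrightarrow> baire_property A"
  unfolding sets_borel
proof (induction rule: sigma_sets.induct)
  case (Compl a)
  then show ?case
    using baire_property_Compl by (simp add: Compl_eq_Diff_UNIV)
qed (auto intro: baire_property_open baire_property_countable_Union)

lemma open_not_meager:
  fixes U :: "'a::t2_space set"
  assumes "locally_compact_space (euclidean :: 'a topology)" "open U" "U \<noteq> {}"
  shows "\<not> meager U"
proof
  assume "meager U"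
  then obtain \<F> where \<F>: "countable \<F>" "\<forall>F\<in>\<F>. nowhere_dense F" "U \<subseteq> \<Union>\<F>"
    unfolding meager_def by blast
  have "Hausdorff_space (euclidean :: 'a topology)"
    unfolding Hausdorff_space_def disjnt_def using hausdorff by fastforce
  then have "regular_space (euclidean :: 'a topology)"
    using assms(1) by (rule locally_compact_Hausdorff_imp_regular_space[rotated])
  then have "euclidean interior_of \<Union>\<F> = {}"
    using assms(1) \<F>(1,2) by (intro Baire_category_alt) (auto simp: nowhere_dense_def)
  moreover have "U \<subseteq> euclidean interior_of \<Union>\<F>"
    using \<F>(3) assms(2) by (intro interior_of_maximal) auto
  ultimately show False
    using assms(3) by simp
qed

text \<open>Pettis' theorem. If \<open>w \<notin> A - A\<close>, the nonempty open set \<open>U \<inter> (w + U)\<close> would be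
  covered by the meager set \<open>(U - A) \<union> (w + (U - A))\<close>.\<close>

lemma baire_property_difference_nhd:
  fixes A :: "'a::{topological_group_add, t2_space} set"
  assumes lc: "locally_compact_space (euclidean :: 'a topology)"
    and "baire_property A" "\<not> meager A"
  obtains W where "open W" "0 \<in> W" "\<And>w. w \<in> W \<Longrightarrow> \<exists>a\<in>A. \<exists>b\<in>A. w = a + - b"
proof -
  obtain U where U: "open U" "meager (A - U)" "meager (U - A)"
    using assms(2) unfolding baire_property_def by blast
  have "U \<noteq> {}"
    using U(2) assms(3) by auto
  then obtain u where u: "u \<in> U"
    by blast
  define W where "W = (\<lambda>x. x + u) -` U"
  have "open W"
    unfolding W_def using U(1) by (intro open_vimage continuous_intros)
  moreover have "0 \<in> W"
    unfolding W_def using u by simp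
  moreover have "\<exists>a\<in>A. \<exists>b\<in>A. w = a + - b" if "w \<in> W" for w
  proof (rule ccontr)
    assume "\<not> ?thesis"
    then have "w + b \<notin> A" if "b \<in> A" for b
      using that by (metis add_diff_cancel diff_conv_add_uminus)
    then have "U \<inter> (+) w ` U \<subseteq> (U - A) \<union> (+) w ` (U - A)"
      by blast
    moreover have "meager ((U - A) \<union> (+) w ` (U - A))"
      using U(3) by (intro meager_Un meager_translation)
    moreover have "w + u \<in> U \<inter> (+) w ` U"
      using that u unfolding W_def by auto
    moreover have "open (U \<inter> (+) w ` U)"
      using U(1) by (intro open_Int open_translation)
    ultimately show False
      using open_not_meager[OF lc] meager_subset by blast
  qed
  ultimately show ?thesis
    using that by blast
qed

lemma length_function_bounded_near_zero:
  fixes l :: "'a::{topological_group_add, t2_space} \<Rightarrow> real"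
  assumes lc: "locally_compact_space (euclidean :: 'a topology)" and lf: "length_function l"
  obtains W D where "open W" "0 \<in> W" "\<And>w. w \<in> W \<Longrightarrow> l w \<le> D"
proof -
  define L where "L n = l -` {..real n}" for n :: nat
  have "L n \<in> sets borel" for n
    unfolding L_def using lf by (intro measurable_sets_borel) (auto simp: length_function_def)
  then have bp: "baire_property (L n)" for n
    by (rule borel_imp_baire_property)
  have "(\<Union>n. L n) = UNIV"
    unfolding L_def by (auto intro: real_nat_ceiling_ge)
  then have "\<exists>n. \<not> meager (L n)"
    using open_not_meager[OF lc, of UNIV] meager_countable_Union[of "range L"] by auto
  then obtain n where "\<not> meager (L n)"
    by blast
  then obtain W where W: "open W" "0 \<in> W" "\<And>w. w \<in> W \<Longrightarrow> \<exists>a\<in>L n. \<exists>b\<in>L n. w = a + - b"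
    using baire_property_difference_nhd[OF lc bp] by blast
  have "l w \<le> 2 * real n" if w: "w \<in> W" for w
  proof -
    obtain a b where ab: "a \<in> L n" "b \<in> L n" "w = a + - b"
      using W(3)[OF w] by blast
    have "l w \<le> l a + l b"
      using lf unfolding length_function_def ab(3) by metis
    then show ?thesis
      using ab(1,2) unfolding L_def by simp
  qed
  with W show ?thesis
    using that by blast
qed

section \<open>The quotient space of right cosets\<close>

lemma is_subgroupD:
  assumes "is_subgroup H"
  shows "0 \<in> H" "\<And>p q. p \<in> H \<Longrightarrow> q \<in> H \<Longrightarrow> p + q \<in> H" "\<And>p. p \<in> H \<Longrightarrow> - p \<in> H"
  using assms unfolding is_subgroup_def by auto

lemma mem_rcoset_self: "is_subgroup H \<Longrightarrow> g \<in> rcoset H g"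
  unfolding rcoset_def using is_subgroupD(1) add_0[of g, symmetric] by blast

lemma rcoset_eq:
  assumes H: "is_subgroup H" and "x \<in> rcoset H a"
  shows "rcoset H x = rcoset H a"
proof -
  obtain h where h: "h \<in> H" "x = h + a"
    using assms(2) unfolding rcoset_def by blast
  show ?thesis
  proof (intro set_eqI iffI)
    fix y
    assume "y \<in> rcoset H x"
    then obtain k where k: "k \<in> H" "y = k + x"
      unfolding rcoset_def by blast
    then have "y = (k + h) + a"
      using h(2) by (simp add: add.assoc)
    then show "y \<in> rcoset H a"
      unfolding rcoset_def using is_subgroupD(2)[OF H k(1) h(1)] by blast
  next
    fix y
    assume "y \<in> rcoset H a"
    then obtain k where k: "k \<in> H" "y = k + a"
      unfolding rcoset_def by blast
    then have "y = (k + - h) + x"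
      using h(2) by (simp add: add.assoc[symmetric])
    then show "y \<in> rcoset H x"
      unfolding rcoset_def using is_subgroupD(2,3)[OF H] k(1) h(1) by blast
  qed
qed

lemma coset_space_eq_rcoset:
  assumes "is_subgroup H" "c \<in> coset_space H" "g \<in> c"
  shows "c = rcoset H g"
proof -
  obtain a where "c = rcoset H a"
    using assms(2) unfolding coset_space_def by blast
  with assms(1,3) show ?thesis
    using rcoset_eq[OF assms(1), of g a] by simp
qed

lemma openin_coset_topology:
  assumes H: "is_subgroup H"
  shows "openin (coset_topology H) U \<longleftrightarrow> U \<subseteq> coset_space H \<and> open (\<Union>U)"
proof -
  have Int: "\<Union>(S \<inter> T) = \<Union>S \<inter> \<Union>T" if "S \<subseteq> coset_space H" "T \<subseteq> coset_space H" for S T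
    using that coset_space_eq_rcoset[OF H] by blast
  have Union: "\<Union>K \<subseteq> coset_space H \<and> open (\<Union>(\<Union>K))"
    if "\<forall>U\<in>K. U \<subseteq> coset_space H \<and> open (\<Union>U)" for K :: "'a set set set"
  proof -
    have "\<Union>(\<Union>K) = (\<Union>U\<in>K. \<Union>U)"
      by blast
    with that show ?thesis
      by (auto intro!: open_UN)
  qed
  have "istopology (\<lambda>U. U \<subseteq> coset_space H \<and> open (\<Union>U))"
    unfolding istopology_def using Union by (auto simp: Int)
  then show ?thesis
    unfolding coset_topology_def by simp
qed

lemma topspace_coset_topology:
  assumes H: "is_subgroup H"
  shows "topspace (coset_topology H) = coset_space H"
proof -
  have "\<Union>(coset_space H) = UNIV"
    using mem_rcoset_self[OF H] unfolding coset_space_def by blast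
  then have "openin (coset_topology H) (coset_space H)"
    using openin_coset_topology[OF H] by simp
  then show ?thesis
    using openin_coset_topology[OF H] openin_subset by (metis openin_topspace subset_antisym)
qed

lemma continuous_map_rcoset:
  assumes H: "is_subgroup H"
  shows "continuous_map euclidean (coset_topology H) (rcoset H)"
  unfolding continuous_map
proof (intro conjI allI impI)
  show "rcoset H ` topspace euclidean \<subseteq> topspace (coset_topology H)"
    unfolding topspace_coset_topology[OF H] coset_space_def by auto
  fix U
  assume "openin (coset_topology H) U"
  then have "U \<subseteq> coset_space H" "open (\<Union>U)"
    using openin_coset_topology[OF H] by auto
  moreover have "{x. rcoset H x \<in> U} = \<Union>U" if "U \<subseteq> coset_space H"
    using that mem_rcoset_self[OF H] coset_space_eq_rcoset[OF H] by blast
  ultimately show "openin euclidean {x \<in> topspace euclidean. rcoset H x \<in> U}"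
    by simp
qed

lemma openin_rcoset_image:
  assumes H: "is_subgroup H" and "open (Q :: 'a::topological_group_add set)"
  shows "openin (coset_topology H) (rcoset H ` Q)"
proof -
  have "\<Union>(rcoset H ` Q) = (\<Union>h\<in>H. (+) h ` Q)"
    unfolding rcoset_def by blast
  moreover have "open (\<Union>h\<in>H. (+) h ` Q)"
    using assms(2) by (intro open_UN ballI open_translation)
  ultimately show ?thesis
    unfolding openin_coset_topology[OF H] coset_space_def by auto
qed

lemma compactin_coset_topology_lift:
  fixes H :: "'a::topological_group_add set"
  assumes H: "is_subgroup H" and lc: "locally_compact_space (euclidean :: 'a topology)"
    and C: "compactin (coset_topology H) C"
  obtains K where "compact K" "C \<subseteq> rcoset H ` K"
proof -
  define \<U> where "\<U> = (\<lambda>K. rcoset H ` interior K) ` {K. compact K}"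
  have "C \<subseteq> \<Union>\<U>"
  proof
    fix c
    assume "c \<in> C"
    then obtain g where g: "c = rcoset H g"
      using compactin_subset_topspace[OF C] unfolding topspace_coset_topology[OF H] coset_space_def
      by blast
    have "\<exists>U K. openin euclidean U \<and> compactin euclidean K \<and> g \<in> U \<and> U \<subseteq> K"
      using lc unfolding locally_compact_space_def by simp
    then obtain U K where "open U" "compact K" "g \<in> U" "U \<subseteq> K"
      by auto
    then have "g \<in> interior K"
      using interior_maximal by blast
    with \<open>compact K\<close> show "c \<in> \<Union>\<U>"
      unfolding \<U>_def g by blast
  qed
  moreover have "\<forall>U\<in>\<U>. openin (coset_topology H) U"
    unfolding \<U>_def using openin_rcoset_image[OF H] by blast
  ultimately obtain \<F> where \<F>: "finite \<F>" "\<F> \<subseteq> \<U>" "C \<subseteq> \<Union>\<F>"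
    using C unfolding compactin_def by meson
  then obtain \<K> where \<K>: "\<K> \<subseteq> {K. compact K}" "finite \<K>" "\<F> = (\<lambda>K. rcoset H ` interior K) ` \<K>"
    unfolding \<U>_def by (meson finite_subset_image)
  show ?thesis
  proof
    show "compact (\<Union>\<K>)"
      using \<K> by (intro compact_Union) auto
    show "C \<subseteq> rcoset H ` \<Union>\<K>"
      using \<F>(3) \<K>(3) interior_subset by blast
  qed
qed

text \<open>The union of the cosets outside \<open>rcoset H ` K\<close> is the complement of the compact set \<open>H + K\<close>.\<close>

lemma closedin_rcoset_image:
  fixes H :: "'a::{topological_group_add, t2_space} set"
  assumes H: "is_subgroup H" "compact H" and "compact K"
  shows "closedin (coset_topology H) (rcoset H ` K)"
proof -
  define S where "S = (\<lambda>p. fst p + snd p) ` (H \<times> K)"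
  have "closed S"
    unfolding S_def using assms
    by (intro compact_imp_closed compact_continuous_image continuous_intros compact_Times)
  have image_iff_S: "rcoset H x \<in> rcoset H ` K \<longleftrightarrow> x \<in> S" for x
  proof
    assume "rcoset H x \<in> rcoset H ` K"
    then obtain k where "k \<in> K" "x \<in> rcoset H k"
      using mem_rcoset_self[OF H(1), of x] by auto
    then obtain h where "h \<in> H" "x = h + k"
      unfolding rcoset_def by blast
    with \<open>k \<in> K\<close> show "x \<in> S"
      unfolding S_def by (intro image_eqI[of _ _ "(h, k)"]) auto
  next
    assume "x \<in> S"
    then obtain h k where "h \<in> H" "k \<in> K" "x = h + k"
      unfolding S_def by auto
    then have "rcoset H x = rcoset H k"
      using rcoset_eq[OF H(1), of x k] unfolding rcoset_def by blast
    with \<open>k \<in> K\<close> show "rcoset H x \<in> rcoset H ` K"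
      by simp
  qed
  have "x \<in> \<Union>(coset_space H - rcoset H ` K) \<longleftrightarrow> x \<notin> S" for x
  proof
    assume "x \<in> \<Union>(coset_space H - rcoset H ` K)"
    then obtain c where "c \<in> coset_space H" "c \<notin> rcoset H ` K" "x \<in> c"
      by blast
    then show "x \<notin> S"
      using coset_space_eq_rcoset[OF H(1)] image_iff_S by metis
  next
    assume "x \<notin> S"
    then have "rcoset H x \<in> coset_space H - rcoset H ` K"
      using image_iff_S unfolding coset_space_def by blast
    then show "x \<in> \<Union>(coset_space H - rcoset H ` K)"
      using mem_rcoset_self[OF H(1), of x] by blast
  qed
  then have "\<Union>(coset_space H - rcoset H ` K) = - S"
    by blast
  moreover have "rcoset H ` K \<subseteq> coset_space H"
    unfolding coset_space_def by blast
  ultimately show ?thesis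
    unfolding closedin_def topspace_coset_topology[OF H(1)] openin_coset_topology[OF H(1)]
    using \<open>closed S\<close> by (simp add: open_Compl)
qed

section \<open>Transferring local boundedness and properness\<close>

lemma lf_equivalent_bounded_difference:
  assumes "0 \<le> c" "\<And>g. l' g \<le> l g + c" "\<And>g. l g \<le> l' g + c"
  shows "lf_equivalent l l'"
  unfolding lf_equivalent_def using assms by (intro exI[of _ c] exI[of _ 1]) simp

lemma locally_bounded_lf_le:
  assumes "locally_bounded_lf l" "\<And>g. l' g \<le> l g + c"
  shows "locally_bounded_lf l'"
  unfolding locally_bounded_lf_def
proof (intro allI impI)
  fix K :: "'a set"
  assume "compact K"
  then obtain B where "\<forall>g\<in>K. l g \<le> B"
    using assms(1) unfolding locally_bounded_lf_def by blast
  then have "\<forall>g\<in>K. l' g \<le> B + c"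
    using assms(2) by (meson add_right_mono order_trans)
  then show "\<exists>B. \<forall>g\<in>K. l' g \<le> B"
    by blast
qed

lemma proper_lf_ge:
  assumes "proper_lf l" "\<And>g. l g \<le> l' g + c"
  shows "proper_lf l'"
  unfolding proper_lf_def
proof
  fix n
  have "l' -` {..n} \<subseteq> l -` {..n + c}"
  proof
    fix x
    assume "x \<in> l' -` {..n}"
    then show "x \<in> l -` {..n + c}"
      using assms(2)[of x] by simp
  qed
  then have "closure (l' -` {..n}) \<subseteq> closure (l -` {..n + c})"
    by (rule closure_mono)
  moreover have "compact (closure (l -` {..n + c}))"
    using assms(1) unfolding proper_lf_def by blast
  ultimately show "compact (closure (l' -` {..n}))"
    by (metis closed_closure compact_Int_closed Int_absorb1)
qed

lemma locally_bounded_pair_if_locally_bounded: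
  fixes l :: "'a::topological_group_add \<Rightarrow> real"
  assumes H: "is_subgroup H" and lc: "locally_compact_space (euclidean :: 'a topology)"
    and pair: "pair_length_function H l" and lb: "locally_bounded_lf l"
  shows "locally_bounded_pair H l"
  unfolding locally_bounded_pair_def
proof (intro allI impI)
  fix C
  assume "compactin (coset_topology H) C"
  then obtain K where K: "compact K" "C \<subseteq> rcoset H ` K"
    using compactin_coset_topology_lift[OF H lc] by blast
  then obtain B where B: "\<forall>k\<in>K. l k \<le> B"
    using lb unfolding locally_bounded_lf_def by blast
  have "l g \<le> B" if cg: "c \<in> C" "g \<in> c" for c g
  proof -
    obtain h k where "h \<in> H" "k \<in> K" "g = h + k"
      using K(2) cg unfolding rcoset_def by blast
    moreover have "l (h + k) \<le> l h + l k"
      using pair unfolding pair_length_function_def length_function_def by blast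
    moreover have "l h = 0"
      using pair \<open>h \<in> H\<close> unfolding pair_length_function_def by blast
    ultimately show ?thesis
      using B by fastforce
  qed
  then show "\<exists>B. \<forall>c\<in>C. \<forall>g\<in>c. l g \<le> B"
    by blast
qed

lemma proper_pair_if_proper:
  fixes H :: "'a::{topological_group_add, t2_space} set"
  assumes H: "is_subgroup H" "compact H" and "proper_lf l"
  shows "proper_pair H l"
  unfolding proper_pair_def
proof
  fix n :: real
  define K where "K = closure (l -` {..n})"
  have "compact K"
    using assms(3) unfolding proper_lf_def K_def by blast
  have "rcoset H ` (l -` {..n}) \<subseteq> rcoset H ` K"
    unfolding K_def by (intro image_mono closure_subset)
  then have sub: "coset_topology H closure_of (rcoset H ` (l -` {..n})) \<subseteq> rcoset H ` K"
    using closedin_rcoset_image[OF H \<open>compact K\<close>] by (rule closure_of_minimal)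
  have "compactin (coset_topology H) (rcoset H ` K)"
    using image_compactin[OF _ continuous_map_rcoset[OF H(1)]] \<open>compact K\<close> by simp
  then show "compactin (coset_topology H) (coset_topology H closure_of (rcoset H ` (l -` {..n})))"
    using sub closedin_closure_of by (rule closed_compactin)
qed

section \<open>Making a length function vanish on a subgroup\<close>

lemma pair_length_function_vanishing:
  fixes f :: "'a::topological_group_add \<Rightarrow> real"
  assumes H: "is_subgroup H" "closed H"
    and f: "f \<in> borel_measurable borel" "\<And>g. 0 \<le> f g" "\<And>g. f (- g) = f g"
      "\<And>g k. f (g + k) \<le> f g + f k"
    and f_left: "\<And>g h. h \<in> H \<Longrightarrow> f (h + g) \<le> f g"
    and f_right: "\<And>g h. h \<in> H \<Longrightarrow> f (g + h) \<le> f g"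
  shows "pair_length_function H (\<lambda>g. if g \<in> H then 0 else f g)" (is "pair_length_function H ?l")
proof -
  note H_add = is_subgroupD(2)[OF H(1)]
  have H_uminus: "- g \<in> H \<longleftrightarrow> g \<in> H" for g
    using is_subgroupD(3)[OF H(1), of g] is_subgroupD(3)[OF H(1), of "- g"] by auto
  have "?l (g + k) \<le> ?l g + ?l k" for g k
  proof (cases "g \<in> H"; cases "k \<in> H")
    assume "g \<in> H" "k \<notin> H"
    moreover have "g + k \<notin> H"
      using H_add[of "- g" "g + k"] H_uminus[of g] \<open>g \<in> H\<close> \<open>k \<notin> H\<close> by (auto simp: add.assoc[symmetric])
    ultimately show ?thesis
      using f_left[of g k] by simp
  next
    assume "g \<notin> H" "k \<in> H"
    moreover have "g + k \<notin> H"
      using H_add[of "g + k" "- k"] H_uminus[of k] \<open>g \<notin> H\<close> \<open>k \<in> H\<close> by (auto simp: add.assoc)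
    ultimately show ?thesis
      using f_right[of k g] by simp
  qed (use H_add f in auto)
  moreover have "?l \<in> borel_measurable borel"
    using H(2) f(1) by (intro measurable_If_set) auto
  ultimately show ?thesis
    unfolding pair_length_function_def length_function_def
    using is_subgroupD(1)[OF H(1)] H_uminus f(2,3) by auto
qed

locale lf_bounded_on_subgroup =
  fixes H :: "'a::topological_group_add set" and l :: "'a \<Rightarrow> real" and C :: real
  assumes subgroup: "is_subgroup H"
    and lf: "length_function l"
    and bounded_on_subgroup: "\<And>h. h \<in> H \<Longrightarrow> l h \<le> C"
begin

lemmas zero_mem = is_subgroupD(1)[OF subgroup]
   and add_mem = is_subgroupD(2)[OF subgroup]
   and uminus_mem = is_subgroupD(3)[OF subgroup]

lemma
  shows l_nonneg: "0 \<le> l g"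
    and l_zero: "l 0 = 0"
    and l_uminus: "l (- g) = l g"
    and l_add: "l (g + k) \<le> l g + l k"
  using lf unfolding length_function_def by auto

lemma bound_nonneg: "0 \<le> C"
  using bounded_on_subgroup[OF zero_mem] l_zero by simp

definition bi_sublevel :: "nat \<Rightarrow> 'a set" where
  "bi_sublevel n = {g. \<forall>h1\<in>H. \<forall>h2\<in>H. l (h1 + g + h2) \<le> real n}"

lemma bi_sublevel_le: "g \<in> bi_sublevel n \<Longrightarrow> l g \<le> real n"
  unfolding bi_sublevel_def using zero_mem by fastforce

lemma mem_bi_sublevel:
  assumes "l g + 2 * C \<le> real n"
  shows "g \<in> bi_sublevel n"
  unfolding bi_sublevel_def
proof (intro CollectI ballI)
  fix h1 h2
  assume "h1 \<in> H" "h2 \<in> H"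
  have "l (h1 + g + h2) \<le> l h1 + l g + l h2"
    using l_add[of "h1 + g" h2] l_add[of h1 g] by simp
  also have "\<dots> \<le> real n"
    using bounded_on_subgroup[OF \<open>h1 \<in> H\<close>] bounded_on_subgroup[OF \<open>h2 \<in> H\<close>] assms by simp
  finally show "l (h1 + g + h2) \<le> real n" .
qed

lemma bi_sublevel_mono:
  assumes "m \<le> n"
  shows "bi_sublevel m \<subseteq> bi_sublevel n"
  unfolding bi_sublevel_def
proof (intro subsetI CollectI ballI)
  fix g h1 h2
  assume "g \<in> {g. \<forall>h1\<in>H. \<forall>h2\<in>H. l (h1 + g + h2) \<le> real m}" "h1 \<in> H" "h2 \<in> H"
  then have "l (h1 + g + h2) \<le> real m"
    by blast
  also have "\<dots> \<le> real n"
    using assms by simp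
  finally show "l (h1 + g + h2) \<le> real n" .
qed

lemma bi_sublevel_add:
  assumes "g \<in> bi_sublevel m" "k \<in> bi_sublevel n"
  shows "g + k \<in> bi_sublevel (m + n)"
  unfolding bi_sublevel_def
proof (intro CollectI ballI)
  fix h1 h2
  assume "h1 \<in> H" "h2 \<in> H"
  have "l (h1 + (g + k) + h2) \<le> l (h1 + g + 0) + l (0 + k + h2)"
    using l_add[of "h1 + g" "k + h2"] by (simp add: add.assoc)
  moreover have "l (h1 + g + 0) \<le> real m" "l (0 + k + h2) \<le> real n"
    using assms \<open>h1 \<in> H\<close> \<open>h2 \<in> H\<close> zero_mem unfolding bi_sublevel_def by blast+
  ultimately show "l (h1 + (g + k) + h2) \<le> real (m + n)"
    by simp
qed

lemma bi_sublevel_uminus: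
  assumes "g \<in> bi_sublevel n"
  shows "- g \<in> bi_sublevel n"
  unfolding bi_sublevel_def
proof (intro CollectI ballI)
  fix h1 h2
  assume "h1 \<in> H" "h2 \<in> H"
  have "- (h1 + - g + h2) = - h2 + g + - h1"
    by (simp only: minus_add minus_minus add.assoc)
  then have "l (h1 + - g + h2) = l (- h2 + g + - h1)"
    using l_uminus[of "h1 + - g + h2"] by (simp only:)
  also have "\<dots> \<le> real n"
    using assms \<open>h1 \<in> H\<close> \<open>h2 \<in> H\<close> uminus_mem unfolding bi_sublevel_def by blast
  finally show "l (h1 + - g + h2) \<le> real n" .
qed

lemma bi_sublevel_add_left:
  assumes "h \<in> H" "g \<in> bi_sublevel n"
  shows "h + g \<in> bi_sublevel n"
  unfolding bi_sublevel_def
proof (intro CollectI ballI)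
  fix h1 h2
  assume "h1 \<in> H" "h2 \<in> H"
  then have "l ((h1 + h) + g + h2) \<le> real n"
    using assms add_mem unfolding bi_sublevel_def by blast
  then show "l (h1 + (h + g) + h2) \<le> real n"
    by (simp add: add.assoc)
qed

lemma bi_sublevel_add_right:
  assumes "h \<in> H" "g \<in> bi_sublevel n"
  shows "g + h \<in> bi_sublevel n"
  unfolding bi_sublevel_def
proof (intro CollectI ballI)
  fix h1 h2
  assume "h1 \<in> H" "h2 \<in> H"
  then have "l (h1 + g + (h + h2)) \<le> real n"
    using assms add_mem unfolding bi_sublevel_def by blast
  then show "l (h1 + (g + h) + h2) \<le> real n"
    by (simp add: add.assoc)
qed

lemma closure_bi_sublevel_add:
  assumes "g \<in> closure (bi_sublevel m)" "k \<in> closure (bi_sublevel n)"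
  shows "g + k \<in> closure (bi_sublevel (m + n))"
proof -
  have "(\<lambda>p. fst p + snd p) ` closure (bi_sublevel m \<times> bi_sublevel n) \<subseteq> closure (bi_sublevel (m + n))"
    using bi_sublevel_add by (intro continuous_image_closure_subset continuous_intros) auto
  then show ?thesis
    using assms by (force simp: closure_Times)
qed

lemma closure_bi_sublevel_image:
  assumes "continuous_on UNIV f" "\<And>g. g \<in> bi_sublevel n \<Longrightarrow> f g \<in> bi_sublevel n"
    and "g \<in> closure (bi_sublevel n)"
  shows "f g \<in> closure (bi_sublevel n)"
  using continuous_image_closure_subset[OF assms(1), of "bi_sublevel n"] assms(2,3) by blast

definition bi_level :: "'a \<Rightarrow> nat" where
  "bi_level g = (LEAST n. g \<in> closure (bi_sublevel n))"

lemma mem_closure_bi_sublevel_ceiling: "g \<in> closure (bi_sublevel (nat \<lceil>l g + 2 * C\<rceil>))"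
  using closure_subset mem_bi_sublevel[OF real_nat_ceiling_ge] by blast

lemma bi_level_le_iff: "bi_level g \<le> n \<longleftrightarrow> g \<in> closure (bi_sublevel n)"
proof
  have "g \<in> closure (bi_sublevel (bi_level g))"
    unfolding bi_level_def using mem_closure_bi_sublevel_ceiling by (rule LeastI)
  then show "bi_level g \<le> n \<Longrightarrow> g \<in> closure (bi_sublevel n)"
    using closure_mono[OF bi_sublevel_mono] by blast
qed (simp add: bi_level_def Least_le)

lemma mem_closure_bi_level: "g \<in> closure (bi_sublevel (bi_level g))"
  using bi_level_le_iff by blast

lemma bi_level_uminus: "bi_level (- g) = bi_level g"
proof -
  have "bi_level (- g) \<le> bi_level g" for g
    unfolding bi_level_le_iff
    by (rule closure_bi_sublevel_image[OF _ bi_sublevel_uminus mem_closure_bi_level])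
       (intro continuous_intros)
  from this[of g] this[of "- g"] show ?thesis
    by simp
qed

lemma bi_level_add: "bi_level (g + k) \<le> bi_level g + bi_level k"
  unfolding bi_level_le_iff by (intro closure_bi_sublevel_add mem_closure_bi_level)

lemma bi_level_add_left: "h \<in> H \<Longrightarrow> bi_level (h + g) \<le> bi_level g"
  unfolding bi_level_le_iff
  by (rule closure_bi_sublevel_image[OF _ bi_sublevel_add_left mem_closure_bi_level])
     (intro continuous_intros)

lemma bi_level_add_right: "h \<in> H \<Longrightarrow> bi_level (g + h) \<le> bi_level g"
  unfolding bi_level_le_iff
  by (rule closure_bi_sublevel_image[of "\<lambda>x. x + h", OF _ bi_sublevel_add_right mem_closure_bi_level])
     (intro continuous_intros)

lemma bi_level_measurable: "(\<lambda>g. real (bi_level g)) \<in> borel_measurable borel"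
  unfolding borel_measurable_iff_le
proof
  fix a :: real
  have "real k \<le> a \<longleftrightarrow> k \<le> nat \<lfloor>a\<rfloor>" if "0 \<le> a" for k :: nat
    using that by linarith
  then have "{g. real (bi_level g) \<le> a} = (if a < 0 then {} else closure (bi_sublevel (nat \<lfloor>a\<rfloor>)))"
    using bi_level_le_iff by auto
  then show "{g \<in> space borel. real (bi_level g) \<le> a} \<in> sets borel"
    by simp
qed

lemma bi_level_le: "real (bi_level g) \<le> l g + 2 * C + 1"
proof -
  have "bi_level g \<le> nat \<lceil>l g + 2 * C\<rceil>"
    using bi_level_le_iff mem_closure_bi_sublevel_ceiling by blast
  then have "real (bi_level g) \<le> real (nat \<lceil>l g + 2 * C\<rceil>)"
    by simp
  then show ?thesis
    using l_nonneg[of g] bound_nonneg by linarith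
qed

lemma le_bi_level:
  assumes W: "open W" "0 \<in> W" "\<And>w. w \<in> W \<Longrightarrow> l w \<le> D"
  shows "l g \<le> real (bi_level g) + D"
proof -
  have "open ((\<lambda>s. - s + g) -` W)" "g \<in> (\<lambda>s. - s + g) -` W"
    using W(1,2) by (auto intro!: open_vimage continuous_intros)
  then obtain s where s: "- s + g \<in> W" "s \<in> bi_sublevel (bi_level g)"
    using mem_closure_bi_level[of g] open_Int_closure_eq_empty by blast
  have "l g \<le> l s + l (- s + g)"
    using l_add[of s "- s + g"] by (simp add: add.assoc)
  then show ?thesis
    using bi_sublevel_le[OF s(2)] W(3)[OF s(1)] by linarith
qed

definition bi_invariant_lf :: "'a \<Rightarrow> real" where
  "bi_invariant_lf g = (if g \<in> H then 0 else real (bi_level g))"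

lemma pair_length_function_bi_invariant_lf:
  assumes "closed H"
  shows "pair_length_function H bi_invariant_lf"
proof -
  have "real (bi_level (g + k)) \<le> real (bi_level g) + real (bi_level k)" for g k
    using bi_level_add[of g k] by linarith
  then show ?thesis
    unfolding bi_invariant_lf_def[abs_def]
    using bi_level_measurable bi_level_uminus bi_level_add_left bi_level_add_right
    by (intro pair_length_function_vanishing subgroup assms) auto
qed

lemma bi_invariant_lf_le: "bi_invariant_lf g \<le> l g + 2 * C + 1"
  unfolding bi_invariant_lf_def using bi_level_le l_nonneg[of g] bound_nonneg by simp

lemma le_bi_invariant_lf:
  assumes "open W" "0 \<in> W" "\<And>w. w \<in> W \<Longrightarrow> l w \<le> D"
  shows "l g \<le> bi_invariant_lf g + C + D"
proof (cases "g \<in> H")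
  case True
  moreover have "0 \<le> D"
    using assms(3)[OF assms(2)] l_zero by simp
  ultimately show ?thesis
    unfolding bi_invariant_lf_def using bounded_on_subgroup[of g] by simp
next
  case False
  then show ?thesis
    unfolding bi_invariant_lf_def using le_bi_level[OF assms, of g] bound_nonneg by simp
qed

end

theorem lemma2p8:
  fixes H :: "'a::{topological_group_add, t2_space} set" and l :: "'a \<Rightarrow> real"
  assumes "locally_compact_space (euclidean :: 'a topology)"
    and "is_subgroup H" and "compact H"
    and "length_function l"
    and "bounded (l ` H)"
  shows "\<exists>l'. length_function l' \<and> lf_equivalent l l' \<and>
           H \<subseteq> {g. l' g = 0} \<and> pair_length_function H l' \<and>
           (locally_bounded_lf l \<longrightarrow> locally_bounded_lf l' \<and> locally_bounded_pair H l') \<and>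
           (proper_lf l \<longrightarrow> proper_lf l' \<and> proper_pair H l')"
proof -
  obtain C where "\<forall>x\<in>l ` H. \<bar>x\<bar> \<le> C"
    using assms(5) unfolding bounded_real by blast
  then interpret lf_bounded_on_subgroup H l C
    using assms(2,4) by unfold_locales auto
  obtain W D where W: "open W" "0 \<in> W" "\<And>w. w \<in> W \<Longrightarrow> l w \<le> D"
    using length_function_bounded_near_zero[OF assms(1,4)] by blast
  define c where "c = 2 * C + D + 1"
  have "0 \<le> D"
    using W(3)[OF W(2)] l_zero by simp
  then have bounds: "0 \<le> c" "\<And>g. bi_invariant_lf g \<le> l g + c" "\<And>g. l g \<le> bi_invariant_lf g + c"
    using bound_nonneg bi_invariant_lf_le le_bi_invariant_lf[OF W] unfolding c_def
    by (smt (verit))+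
  have pair: "pair_length_function H bi_invariant_lf"
    using pair_length_function_bi_invariant_lf compact_imp_closed[OF assms(3)] by blast
  then have "length_function bi_invariant_lf" "H \<subseteq> {g. bi_invariant_lf g = 0}"
    unfolding pair_length_function_def by auto
  moreover have "locally_bounded_lf bi_invariant_lf" if "locally_bounded_lf l"
    using that bounds(2) by (rule locally_bounded_lf_le)
  moreover have "proper_lf bi_invariant_lf" if "proper_lf l"
    using that bounds(3) by (rule proper_lf_ge)
  moreover note locally_bounded_pair_if_locally_bounded[OF assms(2,1) pair]
    proper_pair_if_proper[OF assms(2,3)]
  moreover have "lf_equivalent l bi_invariant_lf"
    using bounds by (rule lf_equivalent_bounded_difference)
  ultimately show ?thesis
    using pair by blast
qed

end
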